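(* Let $\delta\in[1/3,1]$, $\alpha>0$ with $\alpha\delta<1$, $\eta_0^{2}=\frac{1+\alpha^{2}}{1+\delta^{2}}$, $0\le B_0\le\sqrt{1-\eta_0^2\delta^2}$, and $\widetilde{A_\ast}=\sqrt{1-(1+\delta^2)B_0^2}$. Define $\lambda_r,\lambda_i\ge0$ by $$2\lambda_r^{2}=\sqrt2\,\widetilde{A_\ast}+\varepsilon^{2}B_0^{2}(1+\delta^{2})^{2},\qquad 2\lambda_i^{2}=\sqrt2\,\widetilde{A_\ast}-\varepsilon^{2}B_0^{2}(1+\delta^{2})^{2}.$$ If $\alpha\ge\frac{10}{3}\varepsilon^2$ and $\varepsilon>0$ is small enough, then $$\lambda_r\lambda_i\ge\frac{\widetilde{A_\ast}}{2},\qquad \frac{\widetilde{A_\ast}^{1/2}}{2^{1/4}}\le\lambda_r\le2^{1/4}\widetilde{A_\ast}^{1/2},\qquad \frac{\widetilde{A_\ast}^{1/2}}{2^{5/4}}\le\lambda_i\le\frac{\widetilde{A_\ast}^{1/2}}{2^{1/4}},$$ while $\widetilde{A_\ast}$ varies from $1$ to $\alpha\delta$ as $B_0$ varies from $0$ to $\sqrt{1-\eta_0^2\delta^2}$.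
   Context: The numbers $\lambda_r\pm i\lambda_i$, $-\lambda_r\pm i\lambda_i$ are the nonzero roots of $\lambda^4-2\varepsilon^2B_0^2(1+\delta^2)^2\lambda^2+2\widetilde{A_\ast}^2=0$. *)

theory Defs
  imports Complex_Main
begin

definition Atil :: "real \<Rightarrow> real \<Rightarrow> real" where
  "Atil \<delta> B0 = sqrt (1 - (1 + \<delta>^2) * B0^2)"

end

theory Submission
  imports Defs
begin

text \<open>Atil \<delta> is strictly decreasing on [0, \<infinity>) and takes the values 1 and \<alpha>\<delta> at the
  endpoints of the admissible range of B0, so Atil \<delta> B0 \<ge> \<alpha>\<delta> there. Hence the correction
  c = \<epsilon>^2 B0^2 (1 + \<delta>^2)^2 \<le> \<epsilon>^2 (1 + \<delta>^2) \<le> 10/3 \<epsilon>^2 \<delta> \<le> \<alpha>\<delta> never exceeds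
  A = Atil \<delta> B0. Given 0 \<le> c \<le> A, the bounds on lam_r = sqrt ((sqrt 2 A + c) / 2) and
  lam_i = sqrt ((sqrt 2 A - c) / 2) are elementary, and 4 lam_r^2 lam_i^2 = 2 A^2 - c^2 \<ge> A^2.\<close>

lemma Atil_zero [simp]: "Atil \<delta> 0 = 1"
  by (simp add: Atil_def)

lemma continuous_on_Atil: "continuous_on S (Atil \<delta>)"
  unfolding Atil_def by (intro continuous_intros)

lemma Atil_strict_antimono:
  assumes "0 \<le> b1" "b1 < b2"
  shows "Atil \<delta> b2 < Atil \<delta> b1"
proof -
  have "b1^2 < b2^2" using assms by (intro power_strict_mono) auto
  then have "(1 + \<delta>^2) * b1^2 < (1 + \<delta>^2) * b2^2"
    by (intro mult_strict_left_mono) (auto intro: add_pos_nonneg)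
  then show ?thesis unfolding Atil_def by (intro real_sqrt_less_mono) linarith
qed

lemma Atil_antimono: "0 \<le> b1 \<Longrightarrow> b1 \<le> b2 \<Longrightarrow> Atil \<delta> b2 \<le> Atil \<delta> b1"
  using Atil_strict_antimono by (cases "b1 = b2") (auto simp: less_le)

lemma Atil_sqrt_inverse:
  fixes a \<delta> :: real
  assumes "0 \<le> a" "a \<le> 1"
  shows "Atil \<delta> (sqrt ((1 - a^2) / (1 + \<delta>^2))) = a"
proof -
  have "0 < 1 + \<delta>^2" by (simp add: add_pos_nonneg)
  moreover have "0 \<le> 1 - a^2" using assms by (simp add: power_le_one)
  ultimately show ?thesis using assms by (simp add: Atil_def)
qed

lemma Atil_ge:
  fixes a \<delta> B :: real
  assumes "0 \<le> a" "a \<le> 1" "0 \<le> B" "B \<le> sqrt ((1 - a^2) / (1 + \<delta>^2))"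
  shows "a \<le> Atil \<delta> B"
  using Atil_antimono[OF assms(3,4), of \<delta>] by (simp add: Atil_sqrt_inverse assms(1,2))

lemma one_plus_square_le: "1/3 \<le> (\<delta>::real) \<Longrightarrow> \<delta> \<le> 3 \<Longrightarrow> 1 + \<delta>^2 \<le> 10/3 * \<delta>"
  using mult_nonneg_nonneg[of "3 * \<delta> - 1" "3 - \<delta>"] by (simp add: algebra_simps power2_eq_square)

lemma correction_le_Atil:
  fixes \<epsilon> \<delta> \<alpha> B :: real
  assumes "1/3 \<le> \<delta>" "\<delta> \<le> 3" "0 < \<alpha>" "\<alpha> * \<delta> \<le> 1" "10/3 * \<epsilon>^2 \<le> \<alpha>"
    and "0 \<le> B" "B \<le> sqrt ((1 - (\<alpha> * \<delta>)^2) / (1 + \<delta>^2))"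
  shows "\<epsilon>^2 * B^2 * (1 + \<delta>^2)^2 \<le> Atil \<delta> B"
proof -
  have pos: "0 < 1 + \<delta>^2" by (simp add: add_pos_nonneg)
  have "sqrt (B^2) \<le> sqrt ((1 - (\<alpha> * \<delta>)^2) / (1 + \<delta>^2))" using assms(6,7) by simp
  then have "B^2 \<le> (1 - (\<alpha> * \<delta>)^2) / (1 + \<delta>^2)" by (simp only: real_sqrt_le_iff)
  then have "(1 + \<delta>^2) * B^2 \<le> 1 - (\<alpha> * \<delta>)^2"
    using pos by (simp add: pos_le_divide_eq mult.commute)
  then have B_le: "(1 + \<delta>^2) * B^2 \<le> 1" using zero_le_power2[of "\<alpha> * \<delta>"] by linarith
  have "\<epsilon>^2 * B^2 * (1 + \<delta>^2)^2 = \<epsilon>^2 * (1 + \<delta>^2) * ((1 + \<delta>^2) * B^2)"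
    by (simp add: power2_eq_square mult_ac)
  also have "\<dots> \<le> \<epsilon>^2 * (1 + \<delta>^2)" using B_le pos by (simp add: mult_left_le)
  also have "\<dots> \<le> \<epsilon>^2 * (10/3 * \<delta>)"
    using one_plus_square_le[OF assms(1,2)] by (rule mult_left_mono) simp
  also have "\<dots> \<le> \<alpha> * \<delta>" using assms(1,5) by (simp add: mult_right_mono)
  also have "\<dots> \<le> Atil \<delta> B" using assms by (intro Atil_ge) auto
  finally show ?thesis .
qed

lemma one_minus_sq_mult_sq_eq:
  fixes \<eta> \<alpha> \<delta> :: real
  assumes "\<eta>^2 = (1 + \<alpha>^2) / (1 + \<delta>^2)"
  shows "1 - \<eta>^2 * \<delta>^2 = (1 - (\<alpha> * \<delta>)^2) / (1 + \<delta>^2)"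
proof -
  have "0 < 1 + \<delta>^2" by (simp add: add_pos_nonneg)
  then show ?thesis unfolding assms by (simp add: divide_simps) algebra
qed

lemma two_powr_quarter_sqrt_eqs:
  fixes a :: real
  shows "sqrt a / 2 powr (1/4) = sqrt (sqrt 2 * a / 2)"
    and "2 powr (1/4) * sqrt a = sqrt (sqrt 2 * a)"
    and "sqrt a / 2 powr (5/4) = sqrt (sqrt 2 * a / 8)"
proof -
  have quarter: "(2::real) powr (1/4) = sqrt (sqrt 2)"
    using powr_powr[of "2::real" "1/2" "1/2"] by (simp add: powr_half_sqrt)
  have "(2::real) powr (5/4) = 2 * 2 powr (1/4)" using powr_add[of "2::real" 1 "1/4"] by simp
  then have five_quarters: "(2::real) powr (5/4) = sqrt (4 * sqrt 2)"
    by (simp add: quarter real_sqrt_mult)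
  have "a / sqrt 2 = sqrt 2 * a / 2" "a / (4 * sqrt 2) = sqrt 2 * a / 8"
    by (simp_all add: field_simps)
  then show "sqrt a / 2 powr (1/4) = sqrt (sqrt 2 * a / 2)"
    "2 powr (1/4) * sqrt a = sqrt (sqrt 2 * a)"
    "sqrt a / 2 powr (5/4) = sqrt (sqrt 2 * a / 8)"
    unfolding quarter five_quarters by (simp_all flip: real_sqrt_divide real_sqrt_mult)
qed

lemma perturbed_root_bounds:
  fixes A c x y :: real
  assumes c: "0 \<le> c" "c \<le> A" and xy: "0 \<le> x" "0 \<le> y"
    and x2: "2 * x^2 = sqrt 2 * A + c" and y2: "2 * y^2 = sqrt 2 * A - c"
  shows "A / 2 \<le> x * y"
    and "sqrt A / 2 powr (1/4) \<le> x" and "x \<le> 2 powr (1/4) * sqrt A"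
    and "sqrt A / 2 powr (5/4) \<le> y" and "y \<le> sqrt A / 2 powr (1/4)"
proof -
  have A: "0 \<le> A" using c by linarith
  have x_eq: "x = sqrt ((sqrt 2 * A + c) / 2)"
    using x2 xy by (metis real_sqrt_unique nonzero_mult_div_cancel_left zero_neq_numeral)
  have y_eq: "y = sqrt ((sqrt 2 * A - c) / 2)"
    using y2 xy by (metis real_sqrt_unique nonzero_mult_div_cancel_left zero_neq_numeral)
  have "A \<le> sqrt 2 * A" using mult_right_mono[of 1 "sqrt 2" A] A by simp
  moreover have "4/3 * A \<le> sqrt 2 * A"
    using A by (intro mult_right_mono real_le_rsqrt) (auto simp: power2_eq_square)
  ultimately have "sqrt 2 * A / 2 \<le> (sqrt 2 * A + c) / 2" "(sqrt 2 * A + c) / 2 \<le> sqrt 2 * A"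
    "sqrt 2 * A / 8 \<le> (sqrt 2 * A - c) / 2" "(sqrt 2 * A - c) / 2 \<le> sqrt 2 * A / 2"
    using c by (simp_all add: field_simps)
  then show "sqrt A / 2 powr (1/4) \<le> x" "x \<le> 2 powr (1/4) * sqrt A"
    "sqrt A / 2 powr (5/4) \<le> y" "y \<le> sqrt A / 2 powr (1/4)"
    unfolding x_eq y_eq two_powr_quarter_sqrt_eqs by simp_all
  have "4 * (x * y)^2 = (2 * x^2) * (2 * y^2)" by algebra
  also have "\<dots> = 2 * A^2 - c^2" unfolding x2 y2 by (simp add: algebra_simps power2_eq_square)
  finally have "4 * (x * y)^2 = 2 * A^2 - c^2" .
  moreover have "c^2 \<le> A^2" by (rule power_mono[OF c(2,1)])
  ultimately have "(A / 2)^2 \<le> (x * y)^2" by (simp add: power_divide)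
  then show "A / 2 \<le> x * y" by (rule power2_le_imp_le) (use xy in simp)
qed

theorem lemma3:
  shows "\<exists>\<epsilon>0>0. \<forall>\<epsilon> \<delta> \<alpha> \<eta>0 B0 lam_r lam_i :: real.
    0 < \<epsilon> \<and> \<epsilon> < \<epsilon>0 \<and>
    1/3 \<le> \<delta> \<and> \<delta> \<le> 1 \<and> 0 < \<alpha> \<and> \<alpha> * \<delta> < 1 \<and>
    \<eta>0^2 = (1 + \<alpha>^2) / (1 + \<delta>^2) \<and>
    0 \<le> B0 \<and> B0 \<le> sqrt (1 - \<eta>0^2 * \<delta>^2) \<and>
    \<alpha> \<ge> 10/3 * \<epsilon>^2 \<and>
    0 \<le> lam_r \<and> 0 \<le> lam_i \<and>
    2 * lam_r^2 = sqrt 2 * Atil \<delta> B0 + \<epsilon>^2 * B0^2 * (1 + \<delta>^2)^2 \<and>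
    2 * lam_i^2 = sqrt 2 * Atil \<delta> B0 - \<epsilon>^2 * B0^2 * (1 + \<delta>^2)^2
    \<longrightarrow>
    lam_r * lam_i \<ge> Atil \<delta> B0 / 2 \<and>
    sqrt (Atil \<delta> B0) / 2 powr (1/4) \<le> lam_r \<and>
    lam_r \<le> 2 powr (1/4) * sqrt (Atil \<delta> B0) \<and>
    sqrt (Atil \<delta> B0) / 2 powr (5/4) \<le> lam_i \<and>
    lam_i \<le> sqrt (Atil \<delta> B0) / 2 powr (1/4) \<and>
    Atil \<delta> 0 = 1 \<and>
    Atil \<delta> (sqrt (1 - \<eta>0^2 * \<delta>^2)) = \<alpha> * \<delta> \<and>
    continuous_on {0 .. sqrt (1 - \<eta>0^2 * \<delta>^2)} (Atil \<delta>) \<and>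
    (\<forall>b1 b2. 0 \<le> b1 \<and> b1 < b2 \<and> b2 \<le> sqrt (1 - \<eta>0^2 * \<delta>^2)
       \<longrightarrow> Atil \<delta> b2 < Atil \<delta> b1)"
proof (intro exI[of _ 1] conjI allI impI; (elim conjE)?)
  show "(0::real) < 1" by simp
next
  fix \<epsilon> \<delta> \<alpha> \<eta>0 B0 lam_r lam_i :: real
  assume "0 < \<epsilon>" "\<epsilon> < 1" and \<delta>: "1/3 \<le> \<delta>" "\<delta> \<le> 1" and \<alpha>: "0 < \<alpha>" "\<alpha> * \<delta> < 1"
    and \<eta>0: "\<eta>0^2 = (1 + \<alpha>^2) / (1 + \<delta>^2)"
    and B0: "0 \<le> B0" "B0 \<le> sqrt (1 - \<eta>0^2 * \<delta>^2)" and \<epsilon>: "\<alpha> \<ge> 10/3 * \<epsilon>^2"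
    and roots: "0 \<le> lam_r" "0 \<le> lam_i"
      "2 * lam_r^2 = sqrt 2 * Atil \<delta> B0 + \<epsilon>^2 * B0^2 * (1 + \<delta>^2)^2"
      "2 * lam_i^2 = sqrt 2 * Atil \<delta> B0 - \<epsilon>^2 * B0^2 * (1 + \<delta>^2)^2"
  note B0_max = one_minus_sq_mult_sq_eq[OF \<eta>0]
  have "\<epsilon>^2 * B0^2 * (1 + \<delta>^2)^2 \<le> Atil \<delta> B0"
    using \<delta> \<alpha> \<epsilon> B0 unfolding B0_max by (intro correction_le_Atil) auto
  note bounds = perturbed_root_bounds[OF _ this roots]
  show "lam_r * lam_i \<ge> Atil \<delta> B0 / 2"
    "sqrt (Atil \<delta> B0) / 2 powr (1/4) \<le> lam_r" "lam_r \<le> 2 powr (1/4) * sqrt (Atil \<delta> B0)"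
    "sqrt (Atil \<delta> B0) / 2 powr (5/4) \<le> lam_i" "lam_i \<le> sqrt (Atil \<delta> B0) / 2 powr (1/4)"
    using bounds by simp_all
  show "Atil \<delta> (sqrt (1 - \<eta>0^2 * \<delta>^2)) = \<alpha> * \<delta>"
    unfolding B0_max using \<delta> \<alpha> by (intro Atil_sqrt_inverse) auto
  show "Atil \<delta> b2 < Atil \<delta> b1"
    if "0 \<le> b1" "b1 < b2" "b2 \<le> sqrt (1 - \<eta>0^2 * \<delta>^2)" for b1 b2
    using that(1,2) by (rule Atil_strict_antimono)
  show "Atil \<delta> 0 = 1" by simp
  show "continuous_on {0 .. sqrt (1 - \<eta>0^2 * \<delta>^2)} (Atil \<delta>)" by (rule continuous_on_Atil)
qed

end
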